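(* The $\ket{2}$-controlled qubit $Z$ gate can be emulated by a two-qutrit circuit of qutrit Clifford gates and $R$ gates with $R$-count $3$; that is, there is such a circuit $W$ containing exactly three $R$ gates with $W\ket{c,t}=\ket{c,t}$ for $c\in\{0,1\}$, $t\in\{0,1\}$, and $W\ket{2,t}=(-1)^t\ket{2,t}$ for $t\in\{0,1\}$.
   Context: A qutrit is $\mathbb{C}^3$ with basis $\ket{0},\ket{1},\ket{2}$; $\omega=e^{2\pi i/3}$. Qutrit Clifford gates are those generated (up to global phase) by $S=\mathrm{diag}(1,1,\omega)$, $H=\frac{1}{\sqrt3}\begin{pmatrix}1&1&1\\1&\omega&\bar\omega\\1&\bar\omega&\omega\end{pmatrix}$ and $\mathrm{CX}:\ket{i,j}\mapsto\ket{i,(i+j)\bmod3}$. The qutrit reflection gate is $R=\mathrm{diag}(1,1,-1)$. The $R$-count of a circuit is its number of $R$ gates. The first qutrit is the control (any of $\ket{0},\ket{1},\ket{2}$) and the second is the target, restricted to $\{\ket{0},\ket{1}\}$. *)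

theory Defs
  imports Complex_Main
begin

text \<open>Two-qutrit operators are 9x9 complex matrices, represented as functions
  nat => nat => complex on indices 0..8; the basis state |a,b> (a the first
  qutrit, b the second) has index 3*a+b.\<close>

type_synonym op9 = "nat \<Rightarrow> nat \<Rightarrow> complex"

definition omega :: complex where "omega = cis (2 * pi / 3)"

definition S1 :: "nat \<Rightarrow> nat \<Rightarrow> complex" where
  "S1 i j = (if i = j then (if i = 2 then omega else 1) else 0)"
definition H1 :: "nat \<Rightarrow> nat \<Rightarrow> complex" where
  "H1 i j = omega ^ (i * j) / complex_of_real (sqrt 3)"
definition R1 :: "nat \<Rightarrow> nat \<Rightarrow> complex" where
  "R1 i j = (if i = j then (if i = 2 then -1 else 1) else 0)"

text \<open>Gates of a two-qutrit circuit; qutrit indices are 0 (first) and 1 (second).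
  Phase z is a global phase (Clifford gates are generated up to global phase).\<close>
datatype gate = GS nat | GH nat | GCX nat nat | GR nat | GPhase complex

definition lift1 :: "nat \<Rightarrow> (nat \<Rightarrow> nat \<Rightarrow> complex) \<Rightarrow> op9" where
  "lift1 q U r c =
     (let a = r div 3; b = r mod 3; a' = c div 3; b' = c mod 3 in
      if q = 0 then (if b = b' then U a a' else 0)
      else (if a = a' then U b b' else 0))"

text \<open>CX with control qutrit p and target qutrit q: |i,j> -> |i,(i+j) mod 3>
  (ordered with control p, target q).\<close>
definition cx_map :: "nat \<Rightarrow> nat \<Rightarrow> nat" where
  "cx_map p c = (let a = c div 3; b = c mod 3 in
     if p = 0 then 3 * a + (a + b) mod 3 else 3 * ((a + b) mod 3) + b)"

definition cx9 :: "nat \<Rightarrow> op9" where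
  "cx9 p r c = (if r = cx_map p c then 1 else 0)"

fun gate_op :: "gate \<Rightarrow> op9" where
  "gate_op (GS q) = lift1 q S1"
| "gate_op (GH q) = lift1 q H1"
| "gate_op (GR q) = lift1 q R1"
| "gate_op (GCX p q) = cx9 p"
| "gate_op (GPhase z) = (\<lambda>r c. if r = c then z else 0)"

fun valid_gate :: "gate \<Rightarrow> bool" where
  "valid_gate (GS q) = (q < 2)"
| "valid_gate (GH q) = (q < 2)"
| "valid_gate (GR q) = (q < 2)"
| "valid_gate (GCX p q) = (p < 2 \<and> q < 2 \<and> p \<noteq> q)"
| "valid_gate (GPhase z) = (cmod z = 1)"

definition mmul9 :: "op9 \<Rightarrow> op9 \<Rightarrow> op9" where
  "mmul9 A B i k = (\<Sum>j<9. A i j * B j k)"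

definition id9 :: op9 where "id9 i j = (if i = j then 1 else 0)"

text \<open>Circuit as a gate list, first gate applied first: U = g_n ... g_1.\<close>
definition circuit_op :: "gate list \<Rightarrow> op9" where
  "circuit_op gs = foldl (\<lambda>U g. mmul9 (gate_op g) U) id9 gs"

definition is_R :: "gate \<Rightarrow> bool" where
  "is_R g = (case g of GR _ \<Rightarrow> True | _ \<Rightarrow> False)"

definition R_count :: "gate list \<Rightarrow> nat" where
  "R_count gs = length (filter is_R gs)"

definition maps_basis :: "op9 \<Rightarrow> nat \<Rightarrow> nat \<Rightarrow> complex \<Rightarrow> bool" where
  "maps_basis W c t z = (\<forall>r<9. W r (3*c+t) = (if r = 3*c+t then z else 0))"

end

theory Submission
  imports Defs
begin

text \<open>Every CX and R gate is a monomial matrix (a permutation matrix times a diagonal one),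
  so a circuit of such gates sends each basis state to a multiple of a basis state, and that
  image can be tracked gate by gate. Tracking all nine basis states through the circuit
  W shows that it is the diagonal operator with entry -1 exactly on
  |1,2>, |2,1>, |2,2>; with the target restricted to |0>, |1>, this is the |2>-controlled Z.\<close>

definition basis_col :: "op9 \<Rightarrow> nat \<Rightarrow> nat \<Rightarrow> complex \<Rightarrow> bool" where
  "basis_col U k m z \<longleftrightarrow> (\<forall>r<9. U r k = (if r = m then z else 0))"

lemma maps_basis_iff_basis_col: "maps_basis U c t z \<longleftrightarrow> basis_col U (3*c+t) (3*c+t) z"
  by (simp add: maps_basis_def basis_col_def)

lemma basis_col_id9: "k < 9 \<Longrightarrow> basis_col id9 k k 1"
  by (simp add: basis_col_def id9_def)

lemma basis_col_mmul9:
  assumes "basis_col A m m' w" "basis_col U k m z" "m < 9"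
  shows "basis_col (mmul9 A U) k m' (w * z)"
proof -
  have "mmul9 A U r k = A r m * z" if "r < 9" for r
  proof -
    have "mmul9 A U r k = (\<Sum>j<9. if j = m then A r j * z else 0)"
      using assms(2) unfolding mmul9_def basis_col_def by (intro sum.cong) auto
    then show ?thesis using assms(3) by simp
  qed
  then show ?thesis using assms(1) unfolding basis_col_def by auto
qed

fun monomial_gate :: "gate \<Rightarrow> bool" where
  "monomial_gate (GH q) = False"
| "monomial_gate _ = True"

text \<open>Monomial gates other than CX are diagonal; the value on GH is junk.\<close>
fun gate_action :: "gate \<Rightarrow> nat \<Rightarrow> nat \<times> complex" where
  "gate_action (GCX p q) m = (cx_map p m, 1)"
| "gate_action g m = (m, gate_op g m m)"

lemma cx_map_less:
  assumes "m < 9" shows "cx_map p m < 9"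
proof -
  have "m div 3 < 3" "m mod 3 < 3" "(m div 3 + m mod 3) mod 3 < 3" using assms by auto
  then show ?thesis unfolding cx_map_def Let_def by auto
qed

lemma gate_action_less: "m < 9 \<Longrightarrow> fst (gate_action g m) < 9"
  by (cases g) (simp_all add: cx_map_less)

lemma lift1_diagonal:
  assumes "\<And>i j. i \<noteq> j \<Longrightarrow> U i j = 0" "r \<noteq> m"
  shows "lift1 q U r m = 0"
proof -
  have "r div 3 \<noteq> m div 3 \<or> r mod 3 \<noteq> m mod 3"
    using assms(2) by (metis div_mult_mod_eq)
  then show ?thesis unfolding lift1_def Let_def using assms(1) by auto
qed

lemma basis_col_gate_op:
  assumes "monomial_gate g" "m < 9"
  shows "basis_col (gate_op g) m (fst (gate_action g m)) (snd (gate_action g m))"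
proof (cases g)
  case (GCX p q)
  then show ?thesis by (simp add: basis_col_def cx9_def)
next
  case (GS q)
  then show ?thesis by (auto simp: basis_col_def S1_def intro: lift1_diagonal)
next
  case (GR q)
  then show ?thesis by (auto simp: basis_col_def R1_def intro: lift1_diagonal)
qed (use assms in \<open>auto simp: basis_col_def\<close>)

fun basis_track :: "gate list \<Rightarrow> nat \<Rightarrow> complex \<Rightarrow> nat \<times> complex" where
  "basis_track [] m z = (m, z)"
| "basis_track (g # gs) m z =
     basis_track gs (fst (gate_action g m)) (snd (gate_action g m) * z)"

lemma basis_col_foldl:
  assumes "\<forall>g\<in>set gs. monomial_gate g" "m < 9" "basis_col U k m z"
  shows "basis_col (foldl (\<lambda>U g. mmul9 (gate_op g) U) U gs) k
           (fst (basis_track gs m z)) (snd (basis_track gs m z))"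
  using assms
proof (induction gs arbitrary: U m z)
  case Nil
  then show ?case by simp
next
  case (Cons g gs)
  have "basis_col (mmul9 (gate_op g) U) k (fst (gate_action g m)) (snd (gate_action g m) * z)"
    using Cons.prems by (auto intro: basis_col_mmul9[OF basis_col_gate_op])
  then show ?case
    using Cons.prems by (auto intro!: Cons.IH gate_action_less)
qed

lemma basis_col_circuit_op:
  assumes "\<forall>g\<in>set gs. monomial_gate g" "k < 9"
  shows "basis_col (circuit_op gs) k (fst (basis_track gs k 1)) (snd (basis_track gs k 1))"
  unfolding circuit_op_def using assms by (intro basis_col_foldl basis_col_id9)

text \<open>The first four CX gates negate both qutrits.\<close>
definition W :: "gate list" where
  "W = [GCX 0 1, GCX 1 0, GCX 0 1, GCX 1 0, GR 0, GCX 1 0, GR 0, GR 1,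
        GCX 0 1, GCX 1 0, GCX 0 1]"

lemma basis_track_W:
  "k < 9 \<Longrightarrow> basis_track W k 1 = (k, if k \<in> {5, 7, 8} then -1 else 1)"
proof -
  assume "k < 9"
  then consider "k = 0" | "k = 1" | "k = 2" | "k = 3" | "k = 4" | "k = 5" | "k = 6" | "k = 7"
    | "k = 8" by linarith
  then show ?thesis by cases (simp_all add: W_def cx_map_def lift1_def R1_def)
qed

lemma basis_col_W: "k < 9 \<Longrightarrow> basis_col (circuit_op W) k k (if k \<in> {5, 7, 8} then -1 else 1)"
  using basis_col_circuit_op[of W k] basis_track_W by (simp add: W_def)

theorem mainTheorem5:
  shows "\<exists>gs. (\<forall>g\<in>set gs. valid_gate g) \<and> R_count gs = 3 \<and>
    (\<forall>c\<in>{0,1}. \<forall>t\<in>{0,1}. maps_basis (circuit_op gs) c t 1) \<and>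
    (\<forall>t\<in>{0,1::nat}. maps_basis (circuit_op gs) 2 t ((-1) ^ t))"
proof (intro exI conjI)
  show "\<forall>g\<in>set W. valid_gate g" by (simp add: W_def)
  show "R_count W = 3" by (simp add: W_def R_count_def is_R_def)
  show "\<forall>c\<in>{0,1}. \<forall>t\<in>{0,1}. maps_basis (circuit_op W) c t 1"
    using basis_col_W[of 0] basis_col_W[of 1] basis_col_W[of 3] basis_col_W[of 4]
    by (simp add: maps_basis_iff_basis_col)
  show "\<forall>t\<in>{0,1::nat}. maps_basis (circuit_op W) 2 t ((-1) ^ t)"
    using basis_col_W[of 6] basis_col_W[of 7] by (simp add: maps_basis_iff_basis_col)
qed

end
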